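(* Let $n\ge1$, let $u(z)$ be a scalar function and $\mathbf v(z)\in\mathbb R^n$ a vector function (column vector), let $A$ be a constant real skew-symmetric $n\times n$ matrix and $\beta$ a constant. Define the block matrices of block size $(1,1,n,1)\times(1,1,n,1)$ \[ {\cal B}_0=\begin{pmatrix} -1 & 0 & 0 & 0\\ 0 & 0 & 0 & 0\\ 0 & 0 & 0 & 0\\ 0 & 0 & 0 & 1 \end{pmatrix},\quad {\cal B}_1=\begin{pmatrix} 0 & 1 & 0 & 0\\ u & 0 & 0 & 1\\ \mathbf v & 0 & 0 & 0\\ 0 & u & \mathbf v^T & 0 \end{pmatrix},\quad {\cal B}_2= \begin{pmatrix} u & 0 & 0 & 0\\ u' & 0 & \mathbf v^T & 0\\ \mathbf v' & -\mathbf v & 0 & 0\\ 0 & u' & (\mathbf v')^T & -u \end{pmatrix}, \] and ${\cal B}=\zeta{\cal B}_0+{\cal B}_1$, where $\zeta$ is a spectral parameter. Then: (a) The system $u''=\frac32u^2-\frac32(\mathbf v,\mathbf v)+\beta$, $\mathbf v'''=3u\mathbf v'+3u'\mathbf v+A\mathbf v$ admits the isospectral Lax pair ${\cal A}'=[{\cal B},{\cal A}]$ with ${\cal A}=\zeta^3{\cal B}_0+\zeta^2{\cal B}_1+\zeta{\cal B}_2+{\cal B}_3$, where \[ {\cal B}_3= \begin{pmatrix} u' & -u & \mathbf v^T & 0\\ \frac{1}{2}u^2-\frac{1}{2}(\mathbf v,\mathbf v)+\beta & 0 & (\mathbf v')^T & -u\\ \mathbf v''-2u\mathbf v & -\mathbf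 v' & -A & \mathbf v\\ 0 & \frac{1}{2}u^2-\frac{1}{2}(\mathbf v,\mathbf v)+\beta & (\mathbf v'')^T-2u\mathbf v^T & -u' \end{pmatrix}. \] (b) The system $u''=\frac32u^2-\frac32(\mathbf v,\mathbf v)+z$, $\mathbf v'''=3u\mathbf v'+3u'\mathbf v+A\mathbf v$ admits the isomonodromic Lax pair ${\cal A}'={\cal B}_\zeta+[{\cal B},{\cal A}]$ with ${\cal A}=\zeta^4{\cal B}_0+\zeta^3{\cal B}_1+\zeta^2{\cal B}_2+\zeta{\cal B}_3+{\cal B}_4$, where \[ {\cal B}_3= \begin{pmatrix} u' & -u & \mathbf v^T & 0\\ \frac{1}{2}u^2-\frac{1}{2}(\mathbf v,\mathbf v)+z & 0 & (\mathbf v')^T & -u\\ \mathbf v''-2u\mathbf v & -\mathbf v' & -A & \mathbf v\\ 0 & \frac{1}{2}u^2-\frac{1}{2}(\mathbf v,\mathbf v)+z & (\mathbf v'')^T-2u\mathbf v^T & -u' \end{pmatrix},\quad {\cal B}_4=\begin{pmatrix} 0 & 0 & 0 & 0\\ 1 & 0 & 0 & 0\\ 0 & 0 & 0 & 0\\ 0 & 1 & 0 & 0 \end{pmatrix}. \] (c) The system $u'''=3uu'-3(\mathbf v,\mathbf v')+zu'+2u$, $\mathbf v'''=3u\mathbf v'+3u'\mathbf v+z\mathbf v'+(A+2)\mathbf v$ admits the isomonodromic Lax pair ${\cal A}'={\cal B}_\zeta+[{\cal B},{\cal A}]$ with ${\cal A}=-(\zeta-z\zeta^{-1}){\cal B}-{\cal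 B}_2-\zeta^{-1}{\cal B}_3$, where \[ {\cal B}_3= \begin{pmatrix} u'+1 & -u & \mathbf v^T & 0\\ u''-u^2+(\mathbf v,\mathbf v) & 0 & (\mathbf v')^T & -u\\ \mathbf v''-2u\mathbf v & -\mathbf v' & -A & \mathbf v\\ 0 & u''-u^2+(\mathbf v,\mathbf v) & (\mathbf v'')^T-2u\mathbf v^T & -u'-1 \end{pmatrix}. \]
   Context: Primes denote derivatives with respect to $z$; $\zeta$ is independent of $z$; $(\cdot,\cdot)$ is the standard scalar product on $\mathbb R^n$; in (c), $A+2$ means $A+2I_n$. "Admits the Lax pair" means the stated matrix equation holds by virtue of the system. *)

theory Defs
  imports "HOL-Analysis.Analysis"
begin

text \<open>Index set of the (n+3) x (n+3) block matrices with block sizes (1,1,n,1):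
  I0 = first row/column, I1 = second, IV k = k-th index of the middle n-block, I3 = last.\<close>
datatype 'n idx = I0 | I1 | IV 'n | I3

type_synonym ('n) bmat = "'n idx \<Rightarrow> 'n idx \<Rightarrow> real"

definition mmul :: "'n bmat \<Rightarrow> 'n bmat \<Rightarrow> 'n bmat" where
  "mmul X Y = (\<lambda>i j. \<Sum>k\<in>UNIV. X i k * Y k j)"

definition comm :: "'n bmat \<Rightarrow> 'n bmat \<Rightarrow> 'n bmat" where
  "comm X Y = (\<lambda>i j. mmul X Y i j - mmul Y X i j)"

text \<open>Block matrix with blocks
  [a11 a12 r13^T a14; a21 a22 r23^T a24; c31 c32 M33 c34; a41 a42 r43^T a44],
  where r13, r23, r43 are row vectors (given as vectors), c31, c32, c34 column vectors.\<close>
definition blockm ::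
  "real \<Rightarrow> real \<Rightarrow> real^('n::finite) \<Rightarrow> real \<Rightarrow>
   real \<Rightarrow> real \<Rightarrow> real^'n \<Rightarrow> real \<Rightarrow>
   real^'n \<Rightarrow> real^'n \<Rightarrow> real^'n^'n \<Rightarrow> real^'n \<Rightarrow>
   real \<Rightarrow> real \<Rightarrow> real^'n \<Rightarrow> real \<Rightarrow> 'n bmat" where
  "blockm a11 a12 r13 a14 a21 a22 r23 a24 c31 c32 M33 c34 a41 a42 r43 a44 =
    (\<lambda>i j. case i of
        I0 \<Rightarrow> (case j of I0 \<Rightarrow> a11 | I1 \<Rightarrow> a12 | IV l \<Rightarrow> r13 $ l | I3 \<Rightarrow> a14)
      | I1 \<Rightarrow> (case j of I0 \<Rightarrow> a21 | I1 \<Rightarrow> a22 | IV l \<Rightarrow> r23 $ l | I3 \<Rightarrow> a24)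
      | IV k \<Rightarrow> (case j of I0 \<Rightarrow> c31 $ k | I1 \<Rightarrow> c32 $ k | IV l \<Rightarrow> M33 $ k $ l | I3 \<Rightarrow> c34 $ k)
      | I3 \<Rightarrow> (case j of I0 \<Rightarrow> a41 | I1 \<Rightarrow> a42 | IV l \<Rightarrow> r43 $ l | I3 \<Rightarrow> a44))"

definition B0 :: "('n::finite) bmat" where
  "B0 = blockm (-1) 0 0 0  0 0 0 0  0 0 0 0  0 0 0 1"

definition B1 :: "real \<Rightarrow> real^('n::finite) \<Rightarrow> 'n bmat" where
  "B1 u v = blockm 0 1 0 0  u 0 0 1  v 0 0 0  0 u v 0"

definition B2 :: "real \<Rightarrow> real \<Rightarrow> real^('n::finite) \<Rightarrow> real^'n \<Rightarrow> 'n bmat" where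
  "B2 u u' v v' = blockm u 0 0 0  u' 0 v 0  v' (-v) 0 0  0 u' v' (-u)"

text \<open>B3 of parts (a) and (b); the parameter b is beta in (a) and z in (b).\<close>
definition B3ab :: "real^('n::finite)^'n \<Rightarrow> real \<Rightarrow> real \<Rightarrow> real \<Rightarrow> real^'n \<Rightarrow> real^'n \<Rightarrow> real^'n \<Rightarrow> 'n bmat" where
  "B3ab A b u u' v v' v'' =
    (let w = u^2/2 - inner v v / 2 + b in
     blockm u' (-u) v 0
            w 0 v' (-u)
            (v'' - (2*u) *\<^sub>R v) (-v') (-A) v
            0 w (v'' - (2*u) *\<^sub>R v) (-u'))"

definition B4 :: "('n::finite) bmat" where
  "B4 = blockm 0 0 0 0  1 0 0 0  0 0 0 0  0 1 0 0"

definition B3c :: "real^('n::finite)^'n \<Rightarrow> real \<Rightarrow> real \<Rightarrow> real \<Rightarrow> real^'n \<Rightarrow> real^'n \<Rightarrow> real^'n \<Rightarrow> 'n bmat" where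
  "B3c A u u' u'' v v' v'' =
    (let w = u'' - u^2 + inner v v in
     blockm (u' + 1) (-u) v 0
            w 0 v' (-u)
            (v'' - (2*u) *\<^sub>R v) (-v') (-A) v
            0 w (v'' - (2*u) *\<^sub>R v) (-u' - 1))"

definition Bfull :: "real \<Rightarrow> real^('n::finite) \<Rightarrow> real \<Rightarrow> 'n bmat" where
  "Bfull u v \<zeta> = (\<lambda>i j. \<zeta> * B0 i j + B1 u v i j)"

end

theory Submission
  imports Defs
begin

text \<open>
  Write \<open>\<B> = \<zeta> B\<^sub>0 + B\<^sub>1\<close> and compare powers of \<open>\<zeta>\<close> in the
  zero-curvature equation. In (a) the coefficients of \<open>\<zeta>\<^sup>4\<close> and \<open>\<zeta>\<^sup>3\<close>
  vanish identically and the others read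
  \<open>B\<^sub>1' = [B\<^sub>0, B\<^sub>2]\<close>, \<open>B\<^sub>2' = [B\<^sub>0, B\<^sub>3] + [B\<^sub>1, B\<^sub>2]\<close>,
  \<open>B\<^sub>3' = [B\<^sub>1, B\<^sub>3]\<close>: the first is an identity, the second is the
  equation for \<open>u''\<close>, and the third uses both equations and the skew-symmetry of \<open>A\<close>.
  In (b) the constant \<open>\<beta>\<close> in \<open>B\<^sub>3\<close> becomes \<open>z\<close>, which adds
  \<open>\<partial>\<^sub>z B\<^sub>3 = B\<^sub>4\<close> to \<open>B\<^sub>3'\<close>; this is balanced by
  \<open>\<B>\<^sub>\<zeta> = B\<^sub>0\<close>, because \<open>[\<B>, B\<^sub>4] = \<zeta> B\<^sub>4 - B\<^sub>0\<close>.
  In (c) the coefficients of \<open>\<zeta>, 1, \<zeta>\<^sup>-\<^sup>1\<close> give \<open>B\<^sub>1' = [B\<^sub>0, B\<^sub>2]\<close>,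
  \<open>B\<^sub>2' = [B\<^sub>0, B\<^sub>3] + [B\<^sub>1, B\<^sub>2]\<close> (now an identity, since this
  \<open>B\<^sub>3\<close> contains \<open>u''\<close>) and \<open>B\<^sub>3' = B\<^sub>1 + z B\<^sub>1' + [B\<^sub>1, B\<^sub>3]\<close>.
\<close>

lemma UNIV_idx: "(UNIV :: 'n idx set) = {I0, I1, I3} \<union> range IV"
  using idx.exhaust by auto

lemma sum_UNIV_idx:
  "(\<Sum>k\<in>UNIV. f k) = f I0 + f I1 + (\<Sum>l\<in>UNIV. f (IV l)) + f (I3 :: 'n::finite idx)"
  unfolding UNIV_idx by (simp add: sum.reindex inj_on_def image_iff algebra_simps)

definition outer_product :: "real^('n::finite) \<Rightarrow> real^'n \<Rightarrow> real^'n^'n" where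
  "outer_product x y = (\<chi> k l. x $ k * y $ l)"

lemma outer_product_0_left [simp]: "outer_product 0 y = 0"
  and outer_product_0_right [simp]: "outer_product x 0 = 0"
  by (simp_all add: outer_product_def vec_eq_iff)

lemma mmul_blockm:
  "mmul (blockm a11 a12 r13 a14 a21 a22 r23 a24 c31 c32 M c34 a41 a42 r43 a44)
        (blockm b11 b12 s13 b14 b21 b22 s23 b24 d31 d32 N d34 b41 b42 s43 b44) =
   blockm (a11*b11 + a12*b21 + inner r13 d31 + a14*b41)
          (a11*b12 + a12*b22 + inner r13 d32 + a14*b42)
          (a11 *\<^sub>R s13 + a12 *\<^sub>R s23 + r13 v* N + a14 *\<^sub>R s43)
          (a11*b14 + a12*b24 + inner r13 d34 + a14*b44)
          (a21*b11 + a22*b21 + inner r23 d31 + a24*b41)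
          (a21*b12 + a22*b22 + inner r23 d32 + a24*b42)
          (a21 *\<^sub>R s13 + a22 *\<^sub>R s23 + r23 v* N + a24 *\<^sub>R s43)
          (a21*b14 + a22*b24 + inner r23 d34 + a24*b44)
          (b11 *\<^sub>R c31 + b21 *\<^sub>R c32 + M *v d31 + b41 *\<^sub>R c34)
          (b12 *\<^sub>R c31 + b22 *\<^sub>R c32 + M *v d32 + b42 *\<^sub>R c34)
          (outer_product c31 s13 + outer_product c32 s23 + M ** N + outer_product c34 s43)
          (b14 *\<^sub>R c31 + b24 *\<^sub>R c32 + M *v d34 + b44 *\<^sub>R c34)
          (a41*b11 + a42*b21 + inner r43 d31 + a44*b41)
          (a41*b12 + a42*b22 + inner r43 d32 + a44*b42)
          (a41 *\<^sub>R s13 + a42 *\<^sub>R s23 + r43 v* N + a44 *\<^sub>R s43)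
          (a41*b14 + a42*b24 + inner r43 d34 + a44*b44)"
  by (intro ext, simp add: mmul_def blockm_def sum_UNIV_idx inner_vec_def outer_product_def
      matrix_vector_mult_def vector_matrix_mult_def matrix_matrix_mult_def algebra_simps
      split: idx.split)

lemma blockm_add:
  "blockm a11 a12 r13 a14 a21 a22 r23 a24 c31 c32 M c34 a41 a42 r43 a44 i j
   + blockm b11 b12 s13 b14 b21 b22 s23 b24 d31 d32 N d34 b41 b42 s43 b44 i j =
   blockm (a11 + b11) (a12 + b12) (r13 + s13) (a14 + b14) (a21 + b21) (a22 + b22) (r23 + s23)
     (a24 + b24) (c31 + d31) (c32 + d32) (M + N) (c34 + d34) (a41 + b41) (a42 + b42) (r43 + s43)
     (a44 + b44) i j"
  by (simp add: blockm_def split: idx.split)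

lemma blockm_diff:
  "blockm a11 a12 r13 a14 a21 a22 r23 a24 c31 c32 M c34 a41 a42 r43 a44 i j
   - blockm b11 b12 s13 b14 b21 b22 s23 b24 d31 d32 N d34 b41 b42 s43 b44 i j =
   blockm (a11 - b11) (a12 - b12) (r13 - s13) (a14 - b14) (a21 - b21) (a22 - b22) (r23 - s23)
     (a24 - b24) (c31 - d31) (c32 - d32) (M - N) (c34 - d34) (a41 - b41) (a42 - b42) (r43 - s43)
     (a44 - b44) i j"
  by (simp add: blockm_def split: idx.split)

lemma blockm_scale:
  "c * blockm a11 a12 r13 a14 a21 a22 r23 a24 c31 c32 M c34 a41 a42 r43 a44 i j =
   blockm (c * a11) (c * a12) (c *\<^sub>R r13) (c * a14) (c * a21) (c * a22) (c *\<^sub>R r23) (c * a24)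
     (c *\<^sub>R c31) (c *\<^sub>R c32) (c *\<^sub>R M) (c *\<^sub>R c34) (c * a41) (c * a42) (c *\<^sub>R r43) (c * a44) i j"
  by (simp add: blockm_def split: idx.split)

lemma comm_add_left: "comm (\<lambda>i j. X i j + Y i j) Z i j = comm X Z i j + comm Y Z i j"
  by (simp add: comm_def mmul_def algebra_simps sum.distrib)

lemma comm_add_right: "comm X (\<lambda>i j. Y i j + Z i j) i j = comm X Y i j + comm X Z i j"
  by (simp add: comm_def mmul_def algebra_simps sum.distrib)

lemma comm_diff_right: "comm X (\<lambda>i j. Y i j - Z i j) i j = comm X Y i j - comm X Z i j"
  by (simp add: comm_def mmul_def algebra_simps sum_subtractf)

lemma comm_scale_left: "comm (\<lambda>i j. c * X i j) Z i j = c * comm X Z i j"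
  by (simp add: comm_def mmul_def algebra_simps sum_distrib_left)

lemma comm_scale_right: "comm X (\<lambda>i j. c * Y i j) i j = c * comm X Y i j"
  by (simp add: comm_def mmul_def algebra_simps sum_distrib_left)

lemma comm_self: "comm X X i j = 0"
  by (simp add: comm_def)

lemma comm_antisym: "comm X Y i j = - comm Y X i j"
  by (simp add: comm_def)

lemma uminus_matrix_vector_mult: "(- A) *v x = - (A *v x)"
  for A :: "'a::ring_1^'n^'m"
  by (simp add: vec_eq_iff matrix_vector_mult_def sum_negf)

lemma vector_matrix_mult_uminus: "x v* (- A) = - (x v* A)"
  for A :: "'a::ring_1^'n^'m"
  by (simp add: vec_eq_iff vector_matrix_mult_def sum_negf)

lemma skew_vector_matrix_mult:
  fixes A :: "'a::comm_ring_1^'n^'n"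
  assumes "transpose A = - A"
  shows "x v* A = - (A *v x)"
  by (metis assms transpose_matrix_vector uminus_matrix_vector_mult)

lemma mat_matrix_vector_mult: "mat c *v (x::real^'n::finite) = c *\<^sub>R x"
  by (simp add: vec_eq_iff matrix_vector_mult_def mat_def if_distrib if_distribR
      cong del: if_weak_cong)

lemma has_vector_derivative_vec_nth:
  "(f has_vector_derivative f') F \<Longrightarrow> ((\<lambda>t. f t $ k) has_vector_derivative f' $ k) F"
  by (rule bounded_linear.has_vector_derivative[OF bounded_linear_vec_nth])

lemma has_real_derivative_inner:
  "(f has_vector_derivative f') (at z) \<Longrightarrow> (g has_vector_derivative g') (at z) \<Longrightarrow>
   ((\<lambda>t. inner (f t) (g t)) has_real_derivative inner (f z) g' + inner f' (g z)) (at z)"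
  unfolding has_real_derivative_iff_has_vector_derivative
  by (rule bounded_bilinear.has_vector_derivative[OF bounded_bilinear_inner])

lemma blockm_has_real_derivative:
  assumes "(a11 has_real_derivative a11') (at z)" "(a12 has_real_derivative a12') (at z)"
    "(r13 has_vector_derivative r13') (at z)" "(a14 has_real_derivative a14') (at z)"
    "(a21 has_real_derivative a21') (at z)" "(a22 has_real_derivative a22') (at z)"
    "(r23 has_vector_derivative r23') (at z)" "(a24 has_real_derivative a24') (at z)"
    "(c31 has_vector_derivative c31') (at z)" "(c32 has_vector_derivative c32') (at z)"
    "(M has_vector_derivative M') (at z)" "(c34 has_vector_derivative c34') (at z)"
    "(a41 has_real_derivative a41') (at z)" "(a42 has_real_derivative a42') (at z)"
    "(r43 has_vector_derivative r43') (at z)" "(a44 has_real_derivative a44') (at z)"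
  shows "((\<lambda>t. blockm (a11 t) (a12 t) (r13 t) (a14 t) (a21 t) (a22 t) (r23 t) (a24 t)
                  (c31 t) (c32 t) (M t) (c34 t) (a41 t) (a42 t) (r43 t) (a44 t) i j)
          has_real_derivative blockm a11' a12' r13' a14' a21' a22' r23' a24'
                                 c31' c32' M' c34' a41' a42' r43' a44' i j) (at z)"
  using assms
  by (cases i; cases j; simp add: blockm_def has_real_derivative_iff_has_vector_derivative
      has_vector_derivative_vec_nth)

lemma deriv_Bfull: "deriv (\<lambda>\<xi>. Bfull u v \<xi> i j) \<zeta> = B0 i j"
  unfolding Bfull_def by (rule DERIV_imp_deriv) (auto intro!: derivative_eq_intros)

lemma has_real_derivative_B1:
  assumes "(u has_real_derivative u1) (at z)" and "(v has_vector_derivative v1) (at z)"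
  shows "((\<lambda>t. B1 (u t) (v t) i j) has_real_derivative comm B0 (B2 (u z) u1 (v z) v1) i j) (at z)"
proof -
  have "((\<lambda>t. B1 (u t) (v t) i j) has_real_derivative blockm 0 0 0 0 u1 0 0 0 v1 0 0 0 0 u1 v1 0 i j) (at z)"
    unfolding B1_def by (intro blockm_has_real_derivative derivative_intros assms)
  moreover have "blockm 0 0 0 0 u1 0 0 0 v1 0 0 0 0 u1 v1 0 i j = comm B0 (B2 (u z) u1 (v z) v1) i j"
    by (simp add: comm_def B0_def B2_def mmul_blockm blockm_diff)
  ultimately show ?thesis by simp
qed

lemma has_real_derivative_B2:
  assumes "(u has_real_derivative u1 z) (at z)" and "(u1 has_real_derivative u2) (at z)"
    and "(v has_vector_derivative v1 z) (at z)" and "(v1 has_vector_derivative v2) (at z)"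
  shows "((\<lambda>t. B2 (u t) (u1 t) (v t) (v1 t) i j) has_real_derivative B2 (u1 z) u2 (v1 z) v2 i j) (at z)"
  unfolding B2_def by (intro blockm_has_real_derivative derivative_intros assms)

lemma B2_eq_comm_B3ab:
  assumes "u2 = 3/2 * u^2 - 3/2 * inner v v + b"
  shows "B2 u1 u2 v1 v2 i j = comm B0 (B3ab A b u u1 v v1 v2) i j + comm (B1 u v) (B2 u u1 v v1) i j"
  unfolding B0_def B1_def B2_def B3ab_def Let_def comm_def mmul_blockm blockm_diff blockm_add
  by (cases i; cases j; simp add: blockm_def assms algebra_simps power2_eq_square inner_commute)

lemma B2_eq_comm_B3c:
  "B2 u1 u2 v1 v2 i j = comm B0 (B3c A u u1 u2 v v1 v2) i j + comm (B1 u v) (B2 u u1 v v1) i j"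
  unfolding B0_def B1_def B2_def B3c_def Let_def comm_def mmul_blockm blockm_diff blockm_add
  by (cases i; cases j; simp add: blockm_def algebra_simps power2_eq_square inner_commute)

lemma comm_B0_B4: "comm B0 B4 i j = B4 i j"
  unfolding B0_def B4_def comm_def mmul_blockm blockm_diff by simp

lemma comm_B1_B4: "comm (B1 u v) B4 i j = - B0 i j"
  unfolding B0_def B1_def B4_def comm_def mmul_blockm blockm_diff
  by (cases i; cases j; simp add: blockm_def)

lemma has_real_derivative_B3ab:
  fixes A :: "real^'n::finite^'n"
  assumes skew: "transpose A = - A"
    and "(u has_real_derivative u1 z) (at z)" and "(u1 has_real_derivative u2) (at z)"
    and "(v has_vector_derivative v1 z) (at z)" and "(v1 has_vector_derivative v2 z) (at z)"
    and "(v2 has_vector_derivative v3) (at z)" and "(b has_real_derivative b') (at z)"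
    and u2: "u2 = 3/2 * (u z)^2 - 3/2 * inner (v z) (v z) + b z"
    and v3: "v3 = (3 * u z) *\<^sub>R v1 z + (3 * u1 z) *\<^sub>R v z + A *v v z"
  shows "((\<lambda>t. B3ab A (b t) (u t) (u1 t) (v t) (v1 t) (v2 t) i j) has_real_derivative
           comm (B1 (u z) (v z)) (B3ab A (b z) (u z) (u1 z) (v z) (v1 z) (v2 z)) i j + b' * B4 i j)
         (at z)"
proof -
  define w' where "w' = u z * u1 z - inner (v z) (v1 z) + b'"
  define y' where "y' = v3 - (2 * u1 z) *\<^sub>R v z - (2 * u z) *\<^sub>R v1 z"
  have "((\<lambda>t. B3ab A (b t) (u t) (u1 t) (v t) (v1 t) (v2 t) i j) has_real_derivative
          blockm u2 (- u1 z) (v1 z) 0  w' 0 (v2 z) (- u1 z)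
                 y' (- v2 z) 0 (v1 z)  0 w' y' (- u2) i j) (at z)"
    unfolding B3ab_def Let_def w'_def y'_def
    by (rule DERIV_cong[OF blockm_has_real_derivative])
       (auto intro!: derivative_eq_intros has_real_derivative_inner assms
         simp: algebra_simps power2_eq_square inner_commute)
  moreover have "blockm u2 (- u1 z) (v1 z) 0  w' 0 (v2 z) (- u1 z)
                   y' (- v2 z) 0 (v1 z)  0 w' y' (- u2) i j =
      comm (B1 (u z) (v z)) (B3ab A (b z) (u z) (u1 z) (v z) (v1 z) (v2 z)) i j + b' * B4 i j"
    unfolding B1_def B3ab_def B4_def Let_def comm_def mmul_blockm blockm_diff blockm_scale blockm_add
      w'_def y'_def
    by (cases i; cases j; simp add: blockm_def u2 v3 skew_vector_matrix_mult[OF skew]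
        uminus_matrix_vector_mult vector_matrix_mult_uminus algebra_simps power2_eq_square
        inner_commute vec_eq_iff outer_product_def)
  ultimately show ?thesis by simp
qed

lemma has_real_derivative_B3c:
  fixes A :: "real^'n::finite^'n"
  assumes skew: "transpose A = - A"
    and "(u has_real_derivative u1 z) (at z)" and "(u1 has_real_derivative u2 z) (at z)"
    and "(u2 has_real_derivative u3) (at z)"
    and "(v has_vector_derivative v1 z) (at z)" and "(v1 has_vector_derivative v2 z) (at z)"
    and "(v2 has_vector_derivative v3) (at z)"
    and u3: "u3 = 3 * u z * u1 z - 3 * inner (v z) (v1 z) + z * u1 z + 2 * u z"
    and v3: "v3 = (3 * u z) *\<^sub>R v1 z + (3 * u1 z) *\<^sub>R v z + z *\<^sub>R v1 z + (A + mat 2) *v v z"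
  shows "((\<lambda>t. B3c A (u t) (u1 t) (u2 t) (v t) (v1 t) (v2 t) i j) has_real_derivative
           B1 (u z) (v z) i j + z * comm B0 (B2 (u z) (u1 z) (v z) (v1 z)) i j
           + comm (B1 (u z) (v z)) (B3c A (u z) (u1 z) (u2 z) (v z) (v1 z) (v2 z)) i j) (at z)"
proof -
  define w' where "w' = u3 - 2 * u z * u1 z + 2 * inner (v z) (v1 z)"
  define y' where "y' = v3 - (2 * u1 z) *\<^sub>R v z - (2 * u z) *\<^sub>R v1 z"
  have "((\<lambda>t. B3c A (u t) (u1 t) (u2 t) (v t) (v1 t) (v2 t) i j) has_real_derivative
          blockm (u2 z) (- u1 z) (v1 z) 0  w' 0 (v2 z) (- u1 z)
                 y' (- v2 z) 0 (v1 z)  0 w' y' (- u2 z) i j) (at z)"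
    unfolding B3c_def Let_def w'_def y'_def
    by (rule DERIV_cong[OF blockm_has_real_derivative])
       (auto intro!: derivative_eq_intros has_real_derivative_inner assms
         simp: algebra_simps power2_eq_square inner_commute)
  moreover have "blockm (u2 z) (- u1 z) (v1 z) 0  w' 0 (v2 z) (- u1 z)
                   y' (- v2 z) 0 (v1 z)  0 w' y' (- u2 z) i j =
      B1 (u z) (v z) i j + z * comm B0 (B2 (u z) (u1 z) (v z) (v1 z)) i j
      + comm (B1 (u z) (v z)) (B3c A (u z) (u1 z) (u2 z) (v z) (v1 z) (v2 z)) i j"
    unfolding B0_def B1_def B2_def B3c_def Let_def comm_def mmul_blockm blockm_diff blockm_scale
      blockm_add w'_def y'_def
    by (cases i; cases j; simp add: blockm_def u3 v3 skew_vector_matrix_mult[OF skew]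
        uminus_matrix_vector_mult vector_matrix_mult_uminus mat_matrix_vector_mult
        algebra_simps power2_eq_square inner_commute vec_eq_iff outer_product_def)
  ultimately show ?thesis by simp
qed

lemma isospectral_lax_pair:
  fixes A :: "real^'n::finite^'n"
  assumes skew: "transpose A = - A"
    and hu: "(u has_real_derivative u1 z) (at z)" and hu1: "(u1 has_real_derivative u2 z) (at z)"
    and hv: "(v has_vector_derivative v1 z) (at z)" and hv1: "(v1 has_vector_derivative v2 z) (at z)"
    and hv2: "(v2 has_vector_derivative v3 z) (at z)"
    and u2: "u2 z = 3/2 * (u z)^2 - 3/2 * inner (v z) (v z) + \<beta>"
    and v3: "v3 z = (3 * u z) *\<^sub>R v1 z + (3 * u1 z) *\<^sub>R v z + A *v v z"
  shows "((\<lambda>t. \<zeta>^3 * B0 i j + \<zeta>^2 * B1 (u t) (v t) i j + \<zeta> * B2 (u t) (u1 t) (v t) (v1 t) i j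
               + B3ab A \<beta> (u t) (u1 t) (v t) (v1 t) (v2 t) i j)
         has_real_derivative
           comm (Bfull (u z) (v z) \<zeta>)
             (\<lambda>i j. \<zeta>^3 * B0 i j + \<zeta>^2 * B1 (u z) (v z) i j + \<zeta> * B2 (u z) (u1 z) (v z) (v1 z) i j
               + B3ab A \<beta> (u z) (u1 z) (v z) (v1 z) (v2 z) i j) i j) (at z)"
proof -
  let ?B1 = "B1 (u z) (v z)" and ?B2 = "B2 (u z) (u1 z) (v z) (v1 z)"
    and ?B3 = "B3ab A \<beta> (u z) (u1 z) (v z) (v1 z) (v2 z)"
  have B1': "((\<lambda>t. B1 (u t) (v t) i j) has_real_derivative comm B0 ?B2 i j) (at z)"
    using hu hv by (rule has_real_derivative_B1)
  have B2': "((\<lambda>t. B2 (u t) (u1 t) (v t) (v1 t) i j) has_real_derivative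
               comm B0 ?B3 i j + comm ?B1 ?B2 i j) (at z)"
    using has_real_derivative_B2[OF hu hu1 hv hv1] B2_eq_comm_B3ab[OF u2] by simp
  have B3': "((\<lambda>t. B3ab A \<beta> (u t) (u1 t) (v t) (v1 t) (v2 t) i j) has_real_derivative
               comm ?B1 ?B3 i j) (at z)"
    using has_real_derivative_B3ab[where b = "\<lambda>_. \<beta>", OF skew hu hu1 hv hv1 hv2 DERIV_const u2 v3]
    by simp
  have "((\<lambda>t. \<zeta>^3 * B0 i j + \<zeta>^2 * B1 (u t) (v t) i j + \<zeta> * B2 (u t) (u1 t) (v t) (v1 t) i j
               + B3ab A \<beta> (u t) (u1 t) (v t) (v1 t) (v2 t) i j) has_real_derivative
          \<zeta>^2 * comm B0 ?B2 i j + \<zeta> * (comm B0 ?B3 i j + comm ?B1 ?B2 i j) + comm ?B1 ?B3 i j) (at z)"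
    by (auto intro!: derivative_eq_intros B1' B2' B3')
  then show ?thesis
    by (simp add: Bfull_def comm_add_left comm_add_right comm_scale_left comm_scale_right comm_self
        comm_antisym[of ?B1 B0] power2_eq_square power3_eq_cube algebra_simps)
qed

lemma isomonodromic_lax_pair_b:
  fixes A :: "real^'n::finite^'n"
  assumes skew: "transpose A = - A"
    and hu: "(u has_real_derivative u1 z) (at z)" and hu1: "(u1 has_real_derivative u2 z) (at z)"
    and hv: "(v has_vector_derivative v1 z) (at z)" and hv1: "(v1 has_vector_derivative v2 z) (at z)"
    and hv2: "(v2 has_vector_derivative v3 z) (at z)"
    and u2: "u2 z = 3/2 * (u z)^2 - 3/2 * inner (v z) (v z) + z"
    and v3: "v3 z = (3 * u z) *\<^sub>R v1 z + (3 * u1 z) *\<^sub>R v z + A *v v z"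
  shows "((\<lambda>t. \<zeta>^4 * B0 i j + \<zeta>^3 * B1 (u t) (v t) i j + \<zeta>^2 * B2 (u t) (u1 t) (v t) (v1 t) i j
               + \<zeta> * B3ab A t (u t) (u1 t) (v t) (v1 t) (v2 t) i j + B4 i j)
         has_real_derivative
           deriv (\<lambda>\<xi>. Bfull (u z) (v z) \<xi> i j) \<zeta> +
           comm (Bfull (u z) (v z) \<zeta>)
             (\<lambda>i j. \<zeta>^4 * B0 i j + \<zeta>^3 * B1 (u z) (v z) i j + \<zeta>^2 * B2 (u z) (u1 z) (v z) (v1 z) i j
               + \<zeta> * B3ab A z (u z) (u1 z) (v z) (v1 z) (v2 z) i j + B4 i j) i j) (at z)"
proof -
  let ?B1 = "B1 (u z) (v z)" and ?B2 = "B2 (u z) (u1 z) (v z) (v1 z)"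
    and ?B3 = "B3ab A z (u z) (u1 z) (v z) (v1 z) (v2 z)"
  have B1': "((\<lambda>t. B1 (u t) (v t) i j) has_real_derivative comm B0 ?B2 i j) (at z)"
    using hu hv by (rule has_real_derivative_B1)
  have B2': "((\<lambda>t. B2 (u t) (u1 t) (v t) (v1 t) i j) has_real_derivative
               comm B0 ?B3 i j + comm ?B1 ?B2 i j) (at z)"
    using has_real_derivative_B2[OF hu hu1 hv hv1] B2_eq_comm_B3ab[OF u2] by simp
  have B3': "((\<lambda>t. B3ab A t (u t) (u1 t) (v t) (v1 t) (v2 t) i j) has_real_derivative
               comm ?B1 ?B3 i j + B4 i j) (at z)"
    using has_real_derivative_B3ab[where b = "\<lambda>t. t", OF skew hu hu1 hv hv1 hv2 DERIV_ident u2 v3]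
    by simp
  have "((\<lambda>t. \<zeta>^4 * B0 i j + \<zeta>^3 * B1 (u t) (v t) i j + \<zeta>^2 * B2 (u t) (u1 t) (v t) (v1 t) i j
               + \<zeta> * B3ab A t (u t) (u1 t) (v t) (v1 t) (v2 t) i j + B4 i j) has_real_derivative
          \<zeta>^3 * comm B0 ?B2 i j + \<zeta>^2 * (comm B0 ?B3 i j + comm ?B1 ?B2 i j)
          + \<zeta> * (comm ?B1 ?B3 i j + B4 i j)) (at z)"
    by (auto intro!: derivative_eq_intros B1' B2' B3')
  then show ?thesis
    unfolding deriv_Bfull
    by (simp add: Bfull_def comm_add_left comm_add_right comm_scale_left comm_scale_right
        comm_self comm_antisym[of ?B1 B0] comm_B0_B4 comm_B1_B4 power2_eq_square power3_eq_cube
        power4_eq_xxxx algebra_simps)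
qed

lemma isomonodromic_lax_pair_c:
  fixes A :: "real^'n::finite^'n"
  assumes skew: "transpose A = - A" and "\<zeta> \<noteq> 0"
    and hu: "(u has_real_derivative u1 z) (at z)" and hu1: "(u1 has_real_derivative u2 z) (at z)"
    and hu2: "(u2 has_real_derivative u3 z) (at z)"
    and hv: "(v has_vector_derivative v1 z) (at z)" and hv1: "(v1 has_vector_derivative v2 z) (at z)"
    and hv2: "(v2 has_vector_derivative v3 z) (at z)"
    and u3: "u3 z = 3 * u z * u1 z - 3 * inner (v z) (v1 z) + z * u1 z + 2 * u z"
    and v3: "v3 z = (3 * u z) *\<^sub>R v1 z + (3 * u1 z) *\<^sub>R v z + z *\<^sub>R v1 z + (A + mat 2) *v v z"
  shows "((\<lambda>t. - (\<zeta> - t / \<zeta>) * Bfull (u t) (v t) \<zeta> i j - B2 (u t) (u1 t) (v t) (v1 t) i j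
               - (1 / \<zeta>) * B3c A (u t) (u1 t) (u2 t) (v t) (v1 t) (v2 t) i j)
         has_real_derivative
           deriv (\<lambda>\<xi>. Bfull (u z) (v z) \<xi> i j) \<zeta> +
           comm (Bfull (u z) (v z) \<zeta>)
             (\<lambda>i j. - (\<zeta> - z / \<zeta>) * Bfull (u z) (v z) \<zeta> i j - B2 (u z) (u1 z) (v z) (v1 z) i j
               - (1 / \<zeta>) * B3c A (u z) (u1 z) (u2 z) (v z) (v1 z) (v2 z) i j) i j) (at z)"
proof -
  let ?B1 = "B1 (u z) (v z)" and ?B2 = "B2 (u z) (u1 z) (v z) (v1 z)"
    and ?B3 = "B3c A (u z) (u1 z) (u2 z) (v z) (v1 z) (v2 z)"
  have B': "((\<lambda>t. Bfull (u t) (v t) \<zeta> i j) has_real_derivative comm B0 ?B2 i j) (at z)"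
    unfolding Bfull_def by (auto intro!: derivative_eq_intros has_real_derivative_B1 hu hv)
  have B2': "((\<lambda>t. B2 (u t) (u1 t) (v t) (v1 t) i j) has_real_derivative
               comm B0 ?B3 i j + comm ?B1 ?B2 i j) (at z)"
    using has_real_derivative_B2[OF hu hu1 hv hv1] by (simp add: B2_eq_comm_B3c[symmetric])
  have B3': "((\<lambda>t. B3c A (u t) (u1 t) (u2 t) (v t) (v1 t) (v2 t) i j) has_real_derivative
               ?B1 i j + z * comm B0 ?B2 i j + comm ?B1 ?B3 i j) (at z)"
    by (rule has_real_derivative_B3c[OF skew hu hu1 hu2 hv hv1 hv2 u3 v3])
  have "((\<lambda>t. - (\<zeta> - t / \<zeta>) * Bfull (u t) (v t) \<zeta> i j - B2 (u t) (u1 t) (v t) (v1 t) i j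
               - (1 / \<zeta>) * B3c A (u t) (u1 t) (u2 t) (v t) (v1 t) (v2 t) i j) has_real_derivative
          (1 / \<zeta>) * Bfull (u z) (v z) \<zeta> i j - (\<zeta> - z / \<zeta>) * comm B0 ?B2 i j
          - (comm B0 ?B3 i j + comm ?B1 ?B2 i j)
          - (1 / \<zeta>) * (?B1 i j + z * comm B0 ?B2 i j + comm ?B1 ?B3 i j)) (at z)"
    using \<open>\<zeta> \<noteq> 0\<close>
    by (auto intro!: derivative_eq_intros B' B2' B3' simp: field_simps)
  moreover have "(1 / \<zeta>) * Bfull (u z) (v z) \<zeta> i j - (\<zeta> - z / \<zeta>) * comm B0 ?B2 i j
          - (comm B0 ?B3 i j + comm ?B1 ?B2 i j)
          - (1 / \<zeta>) * (?B1 i j + z * comm B0 ?B2 i j + comm ?B1 ?B3 i j) =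
        deriv (\<lambda>\<xi>. Bfull (u z) (v z) \<xi> i j) \<zeta> +
        comm (Bfull (u z) (v z) \<zeta>)
          (\<lambda>i j. - (\<zeta> - z / \<zeta>) * Bfull (u z) (v z) \<zeta> i j - ?B2 i j - (1 / \<zeta>) * ?B3 i j) i j"
    using \<open>\<zeta> \<noteq> 0\<close>
    unfolding deriv_Bfull comm_diff_right comm_scale_right comm_self
    by (simp add: Bfull_def comm_add_left comm_scale_left field_simps)
  ultimately show ?thesis by (rule DERIV_cong)
qed

theorem proposition5:
  fixes A :: "real^'n::finite^'n" and \<beta> :: real
  assumes skew: "transpose A = - A"
  shows
  \<comment> \<open>(a) isospectral Lax pair\<close>
  "(\<forall>(S::real set) (u::real\<Rightarrow>real) u1 u2 (v::real\<Rightarrow>real^'n) v1 v2 v3.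
      open S \<and>
      (\<forall>z\<in>S. (u has_real_derivative u1 z) (at z) \<and> (u1 has_real_derivative u2 z) (at z) \<and>
              (v has_vector_derivative v1 z) (at z) \<and> (v1 has_vector_derivative v2 z) (at z) \<and>
              (v2 has_vector_derivative v3 z) (at z) \<and>
              u2 z = 3/2 * (u z)^2 - 3/2 * inner (v z) (v z) + \<beta> \<and>
              v3 z = (3 * u z) *\<^sub>R v1 z + (3 * u1 z) *\<^sub>R v z + A *v v z)
      \<longrightarrow>
      (\<forall>z\<in>S. \<forall>\<zeta>::real. \<forall>i j.
        ((\<lambda>t. \<zeta>^3 * B0 i j + \<zeta>^2 * B1 (u t) (v t) i j + \<zeta> * B2 (u t) (u1 t) (v t) (v1 t) i j
               + B3ab A \<beta> (u t) (u1 t) (v t) (v1 t) (v2 t) i j)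
         has_real_derivative
           comm (Bfull (u z) (v z) \<zeta>)
             (\<lambda>i j. \<zeta>^3 * B0 i j + \<zeta>^2 * B1 (u z) (v z) i j + \<zeta> * B2 (u z) (u1 z) (v z) (v1 z) i j
               + B3ab A \<beta> (u z) (u1 z) (v z) (v1 z) (v2 z) i j) i j) (at z)))
   \<and>
  \<comment> \<open>(b) isomonodromic Lax pair\<close>
   (\<forall>(S::real set) (u::real\<Rightarrow>real) u1 u2 (v::real\<Rightarrow>real^'n) v1 v2 v3.
      open S \<and>
      (\<forall>z\<in>S. (u has_real_derivative u1 z) (at z) \<and> (u1 has_real_derivative u2 z) (at z) \<and>
              (v has_vector_derivative v1 z) (at z) \<and> (v1 has_vector_derivative v2 z) (at z) \<and>
              (v2 has_vector_derivative v3 z) (at z) \<and>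
              u2 z = 3/2 * (u z)^2 - 3/2 * inner (v z) (v z) + z \<and>
              v3 z = (3 * u z) *\<^sub>R v1 z + (3 * u1 z) *\<^sub>R v z + A *v v z)
      \<longrightarrow>
      (\<forall>z\<in>S. \<forall>\<zeta>::real. \<forall>i j.
        ((\<lambda>t. \<zeta>^4 * B0 i j + \<zeta>^3 * B1 (u t) (v t) i j + \<zeta>^2 * B2 (u t) (u1 t) (v t) (v1 t) i j
               + \<zeta> * B3ab A t (u t) (u1 t) (v t) (v1 t) (v2 t) i j + B4 i j)
         has_real_derivative
           deriv (\<lambda>\<xi>. Bfull (u z) (v z) \<xi> i j) \<zeta> +
           comm (Bfull (u z) (v z) \<zeta>)
             (\<lambda>i j. \<zeta>^4 * B0 i j + \<zeta>^3 * B1 (u z) (v z) i j + \<zeta>^2 * B2 (u z) (u1 z) (v z) (v1 z) i j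
               + \<zeta> * B3ab A z (u z) (u1 z) (v z) (v1 z) (v2 z) i j + B4 i j) i j) (at z)))
   \<and>
  \<comment> \<open>(c) isomonodromic Lax pair\<close>
   (\<forall>(S::real set) (u::real\<Rightarrow>real) u1 u2 u3 (v::real\<Rightarrow>real^'n) v1 v2 v3.
      open S \<and>
      (\<forall>z\<in>S. (u has_real_derivative u1 z) (at z) \<and> (u1 has_real_derivative u2 z) (at z) \<and>
              (u2 has_real_derivative u3 z) (at z) \<and>
              (v has_vector_derivative v1 z) (at z) \<and> (v1 has_vector_derivative v2 z) (at z) \<and>
              (v2 has_vector_derivative v3 z) (at z) \<and>
              u3 z = 3 * u z * u1 z - 3 * inner (v z) (v1 z) + z * u1 z + 2 * u z \<and>
              v3 z = (3 * u z) *\<^sub>R v1 z + (3 * u1 z) *\<^sub>R v z + z *\<^sub>R v1 z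
                     + (A + mat 2) *v v z)
      \<longrightarrow>
      (\<forall>z\<in>S. \<forall>\<zeta>::real. \<zeta> \<noteq> 0 \<longrightarrow> (\<forall>i j.
        ((\<lambda>t. - (\<zeta> - t / \<zeta>) * Bfull (u t) (v t) \<zeta> i j - B2 (u t) (u1 t) (v t) (v1 t) i j
               - (1 / \<zeta>) * B3c A (u t) (u1 t) (u2 t) (v t) (v1 t) (v2 t) i j)
         has_real_derivative
           deriv (\<lambda>\<xi>. Bfull (u z) (v z) \<xi> i j) \<zeta> +
           comm (Bfull (u z) (v z) \<zeta>)
             (\<lambda>i j. - (\<zeta> - z / \<zeta>) * Bfull (u z) (v z) \<zeta> i j - B2 (u z) (u1 z) (v z) (v1 z) i j
               - (1 / \<zeta>) * B3c A (u z) (u1 z) (u2 z) (v z) (v1 z) (v2 z) i j) i j) (at z))))"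
    by (intro conjI allI impI ballI;
      rule isospectral_lax_pair[OF skew] isomonodromic_lax_pair_b[OF skew]
        isomonodromic_lax_pair_c[OF skew]; auto)

end
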